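(* Let $R=kQ/I$ be a string algebra with no DOZE. Then any two distinct bands of $(Q,I)$ (up to cyclic permutation and inversion) have at most one vertex in common.
   Context: A string algebra is $R=kQ/I$ with $I$ generated by paths, each vertex having at most two incoming and two outgoing arrows, and for each arrow $\alpha:x\to y$ at most one arrow $\beta$ from $y$ with $\alpha\beta\notin I$ and at most one arrow $\gamma$ into $x$ with $\gamma\alpha\notin I$ (paths composed left to right). A walk is a sequence of arrows and inverse arrows, reduced if no subwalk $\alpha\alpha^{-1}$ or $\alpha^{-1}\alpha$. A string is a reduced walk containing no zero-relation; a band is a cyclic string, not a power of another cyclic string, all of whose powers are strings. A double-zero is a reduced walk $\rho_1\nu\rho_2$ with $\rho_1,\rho_2$ zero-relations (paths in $I$) traversed along their arrows and $\nu$ a walk; a DOZE is a double-zero $\rho_1\omega_1\omega_2\omega_3\rho_2$ with $\omega_1,\omega_3$ walks and $\omega_2$ a band. *)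

theory Defs
  imports Main "HOL-Library.Sublist"
begin

text \<open>Combinatorial data of a bound quiver (Q,I): vertex set V, arrow set A,
  source s and target t of arrows, and a set Rel of paths generating the
  monomial ideal I.  Paths are lists of arrows, composed left to right.\<close>

datatype 'e letter = Dir 'e | Inv 'e

fun arr :: "'e letter \<Rightarrow> 'e" where
  "arr (Dir a) = a" | "arr (Inv a) = a"

fun lsrc :: "('e \<Rightarrow> 'v) \<Rightarrow> ('e \<Rightarrow> 'v) \<Rightarrow> 'e letter \<Rightarrow> 'v" where
  "lsrc s t (Dir a) = s a" | "lsrc s t (Inv a) = t a"

fun ltgt :: "('e \<Rightarrow> 'v) \<Rightarrow> ('e \<Rightarrow> 'v) \<Rightarrow> 'e letter \<Rightarrow> 'v" where
  "ltgt s t (Dir a) = t a" | "ltgt s t (Inv a) = s a"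

fun linv :: "'e letter \<Rightarrow> 'e letter" where
  "linv (Dir a) = Inv a" | "linv (Inv a) = Dir a"

definition winv :: "'e letter list \<Rightarrow> 'e letter list" where
  "winv w = rev (map linv w)"

definition is_path :: "'e set \<Rightarrow> ('e \<Rightarrow> 'v) \<Rightarrow> ('e \<Rightarrow> 'v) \<Rightarrow> 'e list \<Rightarrow> bool" where
  "is_path A s t p \<longleftrightarrow> p \<noteq> [] \<and> set p \<subseteq> A \<and>
     (\<forall>i. Suc i < length p \<longrightarrow> t (p ! i) = s (p ! Suc i))"

definition in_I :: "'e list set \<Rightarrow> 'e list \<Rightarrow> bool" where
  "in_I Rel p \<longleftrightarrow> (\<exists>r\<in>Rel. sublist r p)"

definition walk :: "'e set \<Rightarrow> ('e \<Rightarrow> 'v) \<Rightarrow> ('e \<Rightarrow> 'v) \<Rightarrow> 'e letter list \<Rightarrow> bool" where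
  "walk A s t w \<longleftrightarrow> (\<forall>l\<in>set w. arr l \<in> A) \<and>
     (\<forall>i. Suc i < length w \<longrightarrow> ltgt s t (w ! i) = lsrc s t (w ! Suc i))"

definition reduced :: "'e letter list \<Rightarrow> bool" where
  "reduced w \<longleftrightarrow> (\<forall>i. Suc i < length w \<longrightarrow> w ! Suc i \<noteq> linv (w ! i))"

definition is_string ::
  "'e set \<Rightarrow> ('e \<Rightarrow> 'v) \<Rightarrow> ('e \<Rightarrow> 'v) \<Rightarrow> 'e list set \<Rightarrow> 'e letter list \<Rightarrow> bool" where
  "is_string A s t Rel w \<longleftrightarrow> walk A s t w \<and> reduced w \<and>
     \<not> (\<exists>p. is_path A s t p \<and> in_I Rel p \<and>
          (sublist (map Dir p) w \<or> sublist (winv (map Dir p)) w))"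

definition cyclic_walk :: "('e \<Rightarrow> 'v) \<Rightarrow> ('e \<Rightarrow> 'v) \<Rightarrow> 'e letter list \<Rightarrow> bool" where
  "cyclic_walk s t w \<longleftrightarrow> w \<noteq> [] \<and> lsrc s t (hd w) = ltgt s t (last w)"

definition is_band ::
  "'e set \<Rightarrow> ('e \<Rightarrow> 'v) \<Rightarrow> ('e \<Rightarrow> 'v) \<Rightarrow> 'e list set \<Rightarrow> 'e letter list \<Rightarrow> bool" where
  "is_band A s t Rel b \<longleftrightarrow>
     is_string A s t Rel b \<and> cyclic_walk s t b \<and>
     (\<forall>n. is_string A s t Rel (concat (replicate n b))) \<and>
     \<not> (\<exists>c m. m \<ge> 2 \<and> is_string A s t Rel c \<and> cyclic_walk s t c \<and>
              b = concat (replicate m c))"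

definition band_equiv :: "'e letter list \<Rightarrow> 'e letter list \<Rightarrow> bool" where
  "band_equiv b b' \<longleftrightarrow> (\<exists>k. b' = rotate k b \<or> b' = rotate k (winv b))"

definition walk_verts :: "('e \<Rightarrow> 'v) \<Rightarrow> ('e \<Rightarrow> 'v) \<Rightarrow> 'e letter list \<Rightarrow> 'v set" where
  "walk_verts s t w = lsrc s t ` set w \<union> ltgt s t ` set w"

definition string_algebra ::
  "'v set \<Rightarrow> 'e set \<Rightarrow> ('e \<Rightarrow> 'v) \<Rightarrow> ('e \<Rightarrow> 'v) \<Rightarrow> 'e list set \<Rightarrow> bool" where
  "string_algebra V A s t Rel \<longleftrightarrow>
     finite V \<and> finite A \<and> (\<forall>a\<in>A. s a \<in> V \<and> t a \<in> V) \<and>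
     (\<forall>r\<in>Rel. is_path A s t r \<and> length r \<ge> 2) \<and>
     (\<forall>v\<in>V. card {a\<in>A. t a = v} \<le> 2 \<and> card {a\<in>A. s a = v} \<le> 2) \<and>
     (\<forall>a\<in>A. card {b\<in>A. s b = t a \<and> \<not> in_I Rel [a, b]} \<le> 1 \<and>
             card {c\<in>A. t c = s a \<and> \<not> in_I Rel [c, a]} \<le> 1)"

definition has_DOZE ::
  "'e set \<Rightarrow> ('e \<Rightarrow> 'v) \<Rightarrow> ('e \<Rightarrow> 'v) \<Rightarrow> 'e list set \<Rightarrow> bool" where
  "has_DOZE A s t Rel \<longleftrightarrow>
     (\<exists>\<rho>1 \<rho>2 \<omega>1 \<omega>2 \<omega>3.
        is_path A s t \<rho>1 \<and> in_I Rel \<rho>1 \<and> is_path A s t \<rho>2 \<and> in_I Rel \<rho>2 \<and>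
        walk A s t \<omega>1 \<and> walk A s t \<omega>3 \<and> is_band A s t Rel \<omega>2 \<and>
        walk A s t (map Dir \<rho>1 @ \<omega>1 @ \<omega>2 @ \<omega>3 @ map Dir \<rho>2) \<and>
        reduced (map Dir \<rho>1 @ \<omega>1 @ \<omega>2 @ \<omega>3 @ map Dir \<rho>2))"

end

theory Submission imports Defs begin

(*
  We prove more than the stated bound: two bands of a string algebra without
  DOZE that are not equivalent up to rotation and inversion share no vertex.

  The argument is local.  Call a pair of consecutive letters "admissible" if it
  may occur in a string: the letters join up, do not cancel, and do not read a
  zero-relation of length two.  The string algebra axioms say that a letter has
  at most one admissible direct and at most one admissible inverse successor,
  and if it has both, their arrows form a zero-relation of length two.

  (1) If a zero-relation of length two links a band X to a band Y and some
      letter of X can be followed by some letter of Y, then, running once around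
      X, over to Y and around Y, we return to the zero-relation: a DOZE.
  (2) If two bands share a letter but are not rotations of each other, follow
      them in lockstep along their (bi-infinite, periodic) readings; since bands
      are primitive they must diverge forwards and backwards, and the two
      divergence points give exactly the situation of (1).
  (3) If two bands share a vertex but no arrow, the four letters of the two
      bands meeting at that vertex force, by the local axioms, a zero-relation
      of length two between them, again the situation of (1).
*)

section \<open>Inverse letters and inverse walks\<close>

lemma linv_linv [simp]: "linv (linv l) = l" by (cases l) auto
lemma arr_linv [simp]: "arr (linv l) = arr l" by (cases l) auto
lemma ltgt_linv [simp]: "ltgt s t (linv l) = lsrc s t l" by (cases l) auto
lemma lsrc_linv [simp]: "lsrc s t (linv l) = ltgt s t l" by (cases l) auto
lemma linv_eq_iff [simp]: "linv a = linv b \<longleftrightarrow> a = b" by (metis linv_linv)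

lemma winv_append [simp]: "winv (xs @ ys) = winv ys @ winv xs" by (simp add: winv_def)
lemma winv_winv [simp]: "winv (winv w) = w" by (simp add: winv_def rev_map comp_def)
lemma set_winv [simp]: "set (winv w) = linv ` set w" by (simp add: winv_def)
lemma winv_Nil [simp]: "winv [] = []" by (simp add: winv_def)
lemma winv_Cons [simp]: "winv (x # xs) = winv xs @ [linv x]" by (simp add: winv_def)

lemma walk_iff:
  "walk A s t w \<longleftrightarrow> (\<forall>l\<in>set w. arr l \<in> A) \<and> successively (\<lambda>p q. ltgt s t p = lsrc s t q) w"
  by (simp add: walk_def successively_conv_nth)

lemma reduced_iff: "reduced w \<longleftrightarrow> successively (\<lambda>p q. q \<noteq> linv p) w"
  by (simp add: reduced_def successively_conv_nth)

lemma walk_winv [simp]: "walk A s t (winv w) \<longleftrightarrow> walk A s t w"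
  by (auto simp: walk_iff winv_def successively_map eq_commute[of "lsrc s t _"])

lemma reduced_winv [simp]: "reduced (winv w) \<longleftrightarrow> reduced w"
  unfolding reduced_iff winv_def successively_rev successively_map
  by (rule successively_cong) fastforce+

lemma sublist_winv_iff [simp]: "sublist (winv xs) (winv ys) \<longleftrightarrow> sublist xs ys"
proof -
  have "sublist (winv xs) (winv ys)" if "sublist xs ys" for xs ys :: "'a letter list"
    using that by (auto simp: sublist_def) (metis append.assoc winv_append)
  then show ?thesis by (metis winv_winv)
qed

lemma is_string_winv [simp]: "is_string A s t Rel (winv w) \<longleftrightarrow> is_string A s t Rel w"
proof -
  have "sublist (map Dir p) (winv w) \<longleftrightarrow> sublist (winv (map Dir p)) w" for p
    by (metis sublist_winv_iff winv_winv)
  then show ?thesis unfolding is_string_def by auto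
qed

lemma walk_sublist: "walk A s t w \<Longrightarrow> sublist v w \<Longrightarrow> walk A s t v"
  by (auto simp: walk_iff sublist_def successively_append_iff)

lemma reduced_sublist: "reduced w \<Longrightarrow> sublist v w \<Longrightarrow> reduced v"
  by (auto simp: reduced_iff sublist_def successively_append_iff)

lemma is_string_sublist: "is_string A s t Rel w \<Longrightarrow> sublist v w \<Longrightarrow> is_string A s t Rel v"
  unfolding is_string_def using walk_sublist reduced_sublist sublist_order.order_trans by metis

lemma concat_replicate_winv: "concat (replicate n (winv b)) = winv (concat (replicate n b))"
proof -
  have comm: "concat (replicate n b) @ b = b @ concat (replicate n b)" for n
    by (induction n) auto
  show ?thesis by (induction n) (simp_all add: comm[symmetric])
qed

lemma cyclic_walk_winv [simp]: "cyclic_walk s t (winv w) \<longleftrightarrow> cyclic_walk s t w"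
  by (cases w rule: rev_cases) (auto simp: cyclic_walk_def winv_def hd_map last_map hd_rev last_rev)

lemma band_ne: "is_band A s t Rel b \<Longrightarrow> b \<noteq> []"
  by (simp add: is_band_def cyclic_walk_def)

lemma is_band_winv:
  assumes "is_band A s t Rel b"
  shows "is_band A s t Rel (winv b)"
proof -
  have "\<not> (2 \<le> m \<and> is_string A s t Rel c \<and> cyclic_walk s t c \<and> winv b = concat (replicate m c))"
    for c m
  proof (intro notI, elim conjE)
    assume m: "2 \<le> m" and c: "is_string A s t Rel c" "cyclic_walk s t c"
      and eq: "winv b = concat (replicate m c)"
    then have "b = concat (replicate m (winv c))" by (metis concat_replicate_winv winv_winv)
    moreover have "is_string A s t Rel (winv c)" "cyclic_walk s t (winv c)" using c by simp_all
    ultimately show False using assms m unfolding is_band_def by blast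
  qed
  then show ?thesis using assms unfolding is_band_def by (auto simp: concat_replicate_winv)
qed

definition joinable :: "('e \<Rightarrow> 'v) \<Rightarrow> ('e \<Rightarrow> 'v) \<Rightarrow> 'e letter \<Rightarrow> 'e letter \<Rightarrow> bool" where
  "joinable s t p q \<longleftrightarrow> ltgt s t p = lsrc s t q \<and> q \<noteq> linv p"

lemma walk_reduced_iff_joinable:
  "walk A s t w \<and> reduced w \<longleftrightarrow> (\<forall>l\<in>set w. arr l \<in> A) \<and> successively (joinable s t) w"
proof -
  have "successively (joinable s t) w \<longleftrightarrow>
      successively (\<lambda>p q. ltgt s t p = lsrc s t q) w \<and> successively (\<lambda>p q. q \<noteq> linv p) w"
    by (induction w rule: induct_list012) (auto simp: joinable_def)
  then show ?thesis by (simp add: walk_iff reduced_iff)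
qed

lemma successively_infix: "successively P (xs @ ys @ zs) \<Longrightarrow> successively P ys"
  by (simp add: successively_append_iff)

text \<open>Three turns around a band form a string, so any stretch of it is a chain of
  joinable letters.\<close>

lemma band_cube_joinable:
  assumes "is_band A s t Rel X"
  shows "successively (joinable s t) (X @ X @ X)"
proof -
  have "is_string A s t Rel (concat (replicate 3 X))"
    using assms by (simp add: is_band_def)
  then have "walk A s t (X @ X @ X) \<and> reduced (X @ X @ X)"
    by (simp add: is_string_def numeral_3_eq_3)
  then show ?thesis by (simp add: walk_reduced_iff_joinable)
qed

lemma band_arrows: "is_band A s t Rel X \<Longrightarrow> l \<in> set X \<Longrightarrow> arr l \<in> A"
  by (auto simp: is_band_def is_string_def walk_def)

lemma band_detour:
  assumes X: "is_band A s t Rel X" and a: "a \<in> set X" and c: "c \<in> set X"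
  obtains M1 M3 where "successively (joinable s t) (a # M1 @ X @ M3)"
    and "last (X @ M3) = c" and "set (M1 @ M3) \<subseteq> set X"
proof -
  obtain i where i: "i < length X" "X ! i = a" using a by (auto simp: in_set_conv_nth)
  obtain j where j: "j < length X" "X ! j = c" using c by (auto simp: in_set_conv_nth)
  have ai: "a # drop (Suc i) X = drop i X" using Cons_nth_drop_Suc[OF i(1)] i(2) by simp
  have "X @ X @ X = take i X @ (drop i X @ X @ take (Suc j) X) @ drop (Suc j) X" by simp
  then have "successively (joinable s t) (drop i X @ X @ take (Suc j) X)"
    using band_cube_joinable[OF X] successively_infix by metis
  moreover have "last (X @ take (Suc j) X) = c"
    using j by (simp add: take_Suc_conv_app_nth)
  moreover have "set (drop (Suc i) X @ take (Suc j) X) \<subseteq> set X"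
    by (auto dest: in_set_dropD in_set_takeD)
  ultimately show ?thesis using that ai by (metis append_Cons)
qed

lemma band_predecessor:
  assumes X: "is_band A s t Rel X" and p: "p \<in> set X"
  obtains c where "c \<in> set X" and "joinable s t c p"
proof -
  obtain i where i: "i < length X" "X ! i = p" using p by (auto simp: in_set_conv_nth)
  have "(X @ take i X) @ p # (drop (Suc i) X @ X) = X @ (take i X @ p # drop (Suc i) X) @ X"
    by simp
  also have "\<dots> = X @ X @ X" using id_take_nth_drop[OF i(1)] i(2) by simp
  finally have "successively (joinable s t) ((X @ take i X) @ p # (drop (Suc i) X @ X))"
    using band_cube_joinable[OF X] by (simp only:)
  then have "joinable s t (last (X @ take i X)) p"
    using successively_append_iff[THEN iffD1] band_ne[OF X] by fastforce
  moreover have "last (X @ take i X) \<in> set X"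
  proof (cases "take i X = []")
    case False
    then show ?thesis by (metis in_set_takeD last_appendR last_in_set)
  qed (simp add: band_ne[OF X])
  ultimately show ?thesis using that by blast
qed

section \<open>Producing a DOZE\<close>

definition zero_pair :: "'e list set \<Rightarrow> 'e letter \<Rightarrow> 'e letter \<Rightarrow> bool" where
  "zero_pair Rel p q \<longleftrightarrow> (\<exists>\<alpha> \<beta>. p = Dir \<alpha> \<and> q = Dir \<beta> \<and> in_I Rel [\<alpha>, \<beta>]) \<or>
                        (\<exists>\<alpha> \<beta>. p = Inv \<alpha> \<and> q = Inv \<beta> \<and> in_I Rel [\<beta>, \<alpha>])"

text \<open>A reduced walk that starts and ends with the same length-two zero-relation
  and passes through a band in between is a DOZE (read backwards if the
  zero-relation is traversed inversely).\<close>

lemma doze_from_walk: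
  assumes band: "is_band A s t Rel B"
    and ok: "successively (joinable s t) W" and arrs: "\<forall>l\<in>set W. arr l \<in> A"
    and W: "W = [p, q] @ M1 @ B @ M2 @ [p, q]"
    and z: "zero_pair Rel p q"
  shows "has_DOZE A s t Rel"
proof -
  have wr: "walk A s t W" "reduced W" using ok arrs walk_reduced_iff_joinable by blast+
  have pq: "joinable s t p q" using ok W by simp
  have wM: "walk A s t M1" "walk A s t M2"
    using walk_sublist[OF wr(1)] W
    by (metis sublist_append_leftI sublist_append_rightI sublist_order.dual_order.trans append.assoc)+
  from z show ?thesis
  proof (unfold zero_pair_def, elim disjE exE conjE)
    fix \<alpha> \<beta> assume e: "p = Dir \<alpha>" "q = Dir \<beta>" "in_I Rel [\<alpha>, \<beta>]"
    have "is_path A s t [\<alpha>, \<beta>]" using pq arrs W e by (auto simp: is_path_def joinable_def)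
    then show ?thesis unfolding has_DOZE_def using e wM band wr W
      by (intro exI[of _ "[\<alpha>, \<beta>]"] exI[of _ M1] exI[of _ B] exI[of _ M2]) auto
  next
    fix \<alpha> \<beta> assume e: "p = Inv \<alpha>" "q = Inv \<beta>" "in_I Rel [\<beta>, \<alpha>]"
    have P: "is_path A s t [\<beta>, \<alpha>]" using pq arrs W e by (auto simp: is_path_def joinable_def)
    have WW: "winv W = map Dir [\<beta>, \<alpha>] @ winv M2 @ winv B @ winv M1 @ map Dir [\<beta>, \<alpha>]"
      using W e by (simp add: winv_def)
    have "walk A s t (winv W)" "reduced (winv W)" "is_band A s t Rel (winv B)"
      using wr is_band_winv[OF band] by auto
    then show ?thesis unfolding has_DOZE_def using P e(3) WW wM
      by (intro exI[of _ "[\<beta>, \<alpha>]"] exI[of _ "winv M2"] exI[of _ "winv B"] exI[of _ "winv M1"]) auto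
  qed
qed

lemma doze_from_two_bands:
  assumes X: "is_band A s t Rel X" and Y: "is_band A s t Rel Y"
    and q: "q \<in> set X" and u: "u \<in> set X" and p: "p \<in> set Y" and v: "v \<in> set Y"
    and pq: "joinable s t p q" and z: "zero_pair Rel p q" and uv: "joinable s t u v"
  shows "has_DOZE A s t Rel"
proof -
  obtain M1 M3 where M: "successively (joinable s t) (q # M1 @ X @ M3)"
    "last (X @ M3) = u" "set (M1 @ M3) \<subseteq> set X"
    using band_detour[OF X q u] by blast
  obtain c where c: "c \<in> set Y" "joinable s t c p" using band_predecessor[OF Y p] by blast
  obtain N1 N3 where N: "successively (joinable s t) (v # N1 @ Y @ N3)"
    "last (Y @ N3) = c" "set (N1 @ N3) \<subseteq> set Y"
    using band_detour[OF Y v c(1)] by blast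
  define W where "W = [p, q] @ M1 @ X @ (M3 @ v # N1 @ Y @ N3) @ [p, q]"
  define around_X where "around_X = q # M1 @ X @ M3"
  define around_Y where "around_Y = v # N1 @ Y @ N3"
  have W': "W = p # around_X @ around_Y @ [p, q]" by (simp add: W_def around_X_def around_Y_def)
  have "last around_X = u" "last around_Y = c" "hd around_X = q" "hd around_Y = v"
    "around_X \<noteq> []" "around_Y \<noteq> []"
    using M(2) N(2) band_ne[OF X] band_ne[OF Y] by (simp_all add: around_X_def around_Y_def)
  then have "successively (joinable s t) W"
    using M(1) N(1) pq uv c(2) unfolding W' around_X_def[symmetric] around_Y_def[symmetric]
    by (simp add: successively_append_iff successively_Cons)
  moreover have "\<forall>l\<in>set W. arr l \<in> A"
    using M(3) N(3) p q v band_arrows[OF X] band_arrows[OF Y] by (auto simp: W_def)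
  ultimately show ?thesis using doze_from_walk[OF X _ _ W_def z] by blast
qed

section \<open>Local structure of a string algebra\<close>

lemma three_in_card_le_2:
  assumes "finite S" "x \<in> S" "y \<in> S" "z \<in> S" "card S \<le> 2"
  shows "x = y \<or> x = z \<or> y = z"
proof (rule ccontr)
  assume "\<not> (x = y \<or> x = z \<or> y = z)"
  then have "card {x, y, z} = 3" by simp
  moreover have "card {x, y, z} \<le> card S" using assms by (intro card_mono) auto
  ultimately show False using assms(5) by simp
qed

lemma string_algebra_local:
  assumes SA: "string_algebra V A s t Rel"
  shows "\<lbrakk>a \<in> A; b \<in> A; b' \<in> A; s b = t a; s b' = t a;
          \<not> in_I Rel [a, b]; \<not> in_I Rel [a, b']\<rbrakk> \<Longrightarrow> b = b'"
    and "\<lbrakk>a \<in> A; c \<in> A; c' \<in> A; t c = s a; t c' = s a;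
          \<not> in_I Rel [c, a]; \<not> in_I Rel [c', a]\<rbrakk> \<Longrightarrow> c = c'"
    and "\<lbrakk>a \<in> A; b \<in> A; c \<in> A; t a = t b; t a = t c\<rbrakk> \<Longrightarrow> a = b \<or> a = c \<or> b = c"
    and "\<lbrakk>a \<in> A; b \<in> A; c \<in> A; s a = s b; s a = s c\<rbrakk> \<Longrightarrow> a = b \<or> a = c \<or> b = c"
proof -
  have fin: "finite {x\<in>A. P x}" for P using SA by (simp add: string_algebra_def)
  have V: "a \<in> A \<Longrightarrow> s a \<in> V \<and> t a \<in> V" for a using SA by (simp add: string_algebra_def)
  have single: "x = y" if "card {z\<in>A. P z} \<le> 1" "x \<in> A" "P x" "y \<in> A" "P y" for P x y
    using that card_le_Suc0_iff_eq[OF fin, of P] by simp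
  show "\<lbrakk>a \<in> A; b \<in> A; b' \<in> A; s b = t a; s b' = t a;
          \<not> in_I Rel [a, b]; \<not> in_I Rel [a, b']\<rbrakk> \<Longrightarrow> b = b'"
    using single[of "\<lambda>b. s b = t a \<and> \<not> in_I Rel [a, b]" b b'] SA
    by (simp add: string_algebra_def)
  show "\<lbrakk>a \<in> A; c \<in> A; c' \<in> A; t c = s a; t c' = s a;
          \<not> in_I Rel [c, a]; \<not> in_I Rel [c', a]\<rbrakk> \<Longrightarrow> c = c'"
    using single[of "\<lambda>c. t c = s a \<and> \<not> in_I Rel [c, a]" c c'] SA
    by (simp add: string_algebra_def)
  show "\<lbrakk>a \<in> A; b \<in> A; c \<in> A; t a = t b; t a = t c\<rbrakk> \<Longrightarrow> a = b \<or> a = c \<or> b = c"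
    using SA V three_in_card_le_2[OF fin, of a "\<lambda>x. t x = t a" b c]
    by (simp add: string_algebra_def)
  show "\<lbrakk>a \<in> A; b \<in> A; c \<in> A; s a = s b; s a = s c\<rbrakk> \<Longrightarrow> a = b \<or> a = c \<or> b = c"
    using SA V three_in_card_le_2[OF fin, of a "\<lambda>x. s x = s a" b c]
    by (simp add: string_algebra_def)
qed

definition admissible ::
  "'e set \<Rightarrow> ('e \<Rightarrow> 'v) \<Rightarrow> ('e \<Rightarrow> 'v) \<Rightarrow> 'e list set \<Rightarrow> 'e letter \<Rightarrow> 'e letter \<Rightarrow> bool" where
  "admissible A s t Rel p q \<longleftrightarrow>
     joinable s t p q \<and> \<not> zero_pair Rel p q \<and> arr p \<in> A \<and> arr q \<in> A"

lemma admissible_simps [simp]: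
  "admissible A s t Rel (Dir \<alpha>) (Dir \<beta>) \<longleftrightarrow> t \<alpha> = s \<beta> \<and> \<not> in_I Rel [\<alpha>, \<beta>] \<and> \<alpha> \<in> A \<and> \<beta> \<in> A"
  "admissible A s t Rel (Dir \<alpha>) (Inv \<gamma>) \<longleftrightarrow> t \<alpha> = t \<gamma> \<and> \<gamma> \<noteq> \<alpha> \<and> \<alpha> \<in> A \<and> \<gamma> \<in> A"
  "admissible A s t Rel (Inv \<alpha>) (Dir \<beta>) \<longleftrightarrow> s \<alpha> = s \<beta> \<and> \<beta> \<noteq> \<alpha> \<and> \<alpha> \<in> A \<and> \<beta> \<in> A"
  "admissible A s t Rel (Inv \<alpha>) (Inv \<gamma>) \<longleftrightarrow> s \<alpha> = t \<gamma> \<and> \<not> in_I Rel [\<gamma>, \<alpha>] \<and> \<alpha> \<in> A \<and> \<gamma> \<in> A"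
  by (auto simp: admissible_def joinable_def zero_pair_def)

lemma admissible_Dir_unique:
  assumes SA: "string_algebra V A s t Rel"
    and b1: "admissible A s t Rel m (Dir \<beta>1)" and b2: "admissible A s t Rel m (Dir \<beta>2)"
  shows "\<beta>1 = \<beta>2"
proof (cases m)
  case (Dir \<alpha>)
  with b1 b2 show ?thesis by (intro string_algebra_local(1)[OF SA, of \<alpha>]) simp_all
next
  case (Inv \<alpha>)
  with b1 b2 have "\<beta>1 = \<beta>2 \<or> \<beta>1 = \<alpha> \<or> \<beta>2 = \<alpha>"
    by (intro string_algebra_local(4)[OF SA]) simp_all
  with Inv b1 b2 show ?thesis by auto
qed

lemma admissible_Inv_unique:
  assumes SA: "string_algebra V A s t Rel"
    and c1: "admissible A s t Rel m (Inv \<gamma>1)" and c2: "admissible A s t Rel m (Inv \<gamma>2)"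
  shows "\<gamma>1 = \<gamma>2"
proof (cases m)
  case (Dir \<alpha>)
  with c1 c2 have "\<gamma>1 = \<gamma>2 \<or> \<gamma>1 = \<alpha> \<or> \<gamma>2 = \<alpha>"
    by (intro string_algebra_local(3)[OF SA]) simp_all
  with Dir c1 c2 show ?thesis by auto
next
  case (Inv \<alpha>)
  with c1 c2 show ?thesis by (intro string_algebra_local(2)[OF SA, of \<alpha>]) simp_all
qed

lemma admissible_Dir_Inv_zero:
  assumes SA: "string_algebra V A s t Rel"
    and D: "admissible A s t Rel m (Dir \<beta>)" and I: "admissible A s t Rel m (Inv \<gamma>)"
  shows "in_I Rel [\<gamma>, \<beta>]"
proof (rule ccontr)
  assume nz: "\<not> in_I Rel [\<gamma>, \<beta>]"
  show False
  proof (cases m)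
    case (Dir \<alpha>)
    with D I nz have "\<gamma> = \<alpha>" by (intro string_algebra_local(2)[OF SA, of \<beta>]) simp_all
    with Dir I show False by simp
  next
    case (Inv \<alpha>)
    with D I nz have "\<beta> = \<alpha>" by (intro string_algebra_local(1)[OF SA, of \<gamma>]) simp_all
    with Inv D show False by simp
  qed
qed

lemma admissible_branching:
  assumes SA: "string_algebra V A s t Rel"
    and l1: "admissible A s t Rel m l1" and l2: "admissible A s t Rel m l2" and ne: "l1 \<noteq> l2"
  obtains \<beta> \<gamma> where "l1 = Dir \<beta> \<and> l2 = Inv \<gamma> \<or> l1 = Inv \<gamma> \<and> l2 = Dir \<beta>"
    and "joinable s t (Dir \<gamma>) (Dir \<beta>)" and "zero_pair Rel (Dir \<gamma>) (Dir \<beta>)"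
    and "\<gamma> \<in> A" and "\<beta> \<in> A"
proof -
  have mixed: "joinable s t (Dir \<gamma>) (Dir \<beta>) \<and> zero_pair Rel (Dir \<gamma>) (Dir \<beta>) \<and> \<gamma> \<in> A \<and> \<beta> \<in> A"
    if "admissible A s t Rel m (Dir \<beta>)" "admissible A s t Rel m (Inv \<gamma>)" for \<beta> \<gamma>
    using that admissible_Dir_Inv_zero[OF SA that]
    by (auto simp: admissible_def joinable_def zero_pair_def)
  show ?thesis
  proof (cases l1; cases l2)
    fix \<beta>1 \<beta>2 assume "l1 = Dir \<beta>1" "l2 = Dir \<beta>2"
    then show ?thesis using admissible_Dir_unique[OF SA] l1 l2 ne by blast
  next
    fix \<beta> \<gamma> assume "l1 = Dir \<beta>" "l2 = Inv \<gamma>"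
    then show ?thesis using that mixed l1 l2 by blast
  next
    fix \<gamma> \<beta> assume "l1 = Inv \<gamma>" "l2 = Dir \<beta>"
    then show ?thesis using that mixed l1 l2 by blast
  next
    fix \<gamma>1 \<gamma>2 assume "l1 = Inv \<gamma>1" "l2 = Inv \<gamma>2"
    then show ?thesis using admissible_Inv_unique[OF SA] l1 l2 ne by blast
  qed
qed

text \<open>Of three different joinable successors of a letter, one of which is
  admissible, at least one of the other two reads a zero-relation: there are only
  two directions to go.\<close>

lemma three_successors_zero:
  assumes SA: "string_algebra V A s t Rel"
    and f: "admissible A s t Rel e f"
    and h: "joinable s t e h" "arr h \<in> A" and h': "joinable s t e h'" "arr h' \<in> A"
    and ne: "f \<noteq> h" "f \<noteq> h'" "h \<noteq> h'"
  shows "zero_pair Rel e h \<or> zero_pair Rel e h'"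
proof (rule ccontr)
  assume "\<not> (zero_pair Rel e h \<or> zero_pair Rel e h')"
  then have adm: "admissible A s t Rel e h" "admissible A s t Rel e h'"
    using f h h' by (auto simp: admissible_def)
  have opposite: "(\<exists>a. x = Dir a) \<noteq> (\<exists>a. y = Dir a)"
    if "admissible A s t Rel e x" "admissible A s t Rel e y" "x \<noteq> y" for x y
    using admissible_branching[OF SA that] by blast
  show False using opposite[OF f adm(1) ne(1)] opposite[OF f adm(2) ne(2)] opposite[OF adm ne(3)]
    by blast
qed

section \<open>The periodic reading of a band\<close>

lemma string_admissible:
  assumes str: "is_string A s t Rel w" and i: "Suc i < length w"
  shows "admissible A s t Rel (w ! i) (w ! Suc i)"
proof -
  let ?p = "w ! i" and ?q = "w ! Suc i"
  have wr: "walk A s t w" "reduced w" using str by (auto simp: is_string_def)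
  have j: "joinable s t ?p ?q" using wr i by (auto simp: walk_def reduced_def joinable_def)
  have A: "arr ?p \<in> A" "arr ?q \<in> A" using wr(1) i by (auto simp: walk_def)
  have sub: "sublist [?p, ?q] w"
  proof -
    have "w = take i w @ [?p, ?q] @ drop (Suc (Suc i)) w"
      using i by (simp add: Cons_nth_drop_Suc)
    then show ?thesis unfolding sublist_def by blast
  qed
  have "\<not> zero_pair Rel ?p ?q"
  proof (unfold zero_pair_def, safe)
    fix \<alpha> \<beta> assume e: "?p = Dir \<alpha>" "?q = Dir \<beta>" and z: "in_I Rel [\<alpha>, \<beta>]"
    have "is_path A s t [\<alpha>, \<beta>]" using A j e by (auto simp: is_path_def joinable_def)
    moreover have "sublist (map Dir [\<alpha>, \<beta>]) w" using sub e by simp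
    ultimately show False using str z unfolding is_string_def by blast
  next
    fix \<alpha> \<beta> assume e: "?p = Inv \<alpha>" "?q = Inv \<beta>" and z: "in_I Rel [\<beta>, \<alpha>]"
    have "is_path A s t [\<beta>, \<alpha>]" using A j e by (auto simp: is_path_def joinable_def)
    moreover have "sublist (winv (map Dir [\<beta>, \<alpha>])) w" using sub e by (simp add: winv_def)
    ultimately show False using str z unfolding is_string_def by blast
  qed
  then show ?thesis using j A by (simp add: admissible_def)
qed

definition per :: "'a list \<Rightarrow> int \<Rightarrow> 'a" where
  "per b z = b ! nat (z mod int (length b))"

lemma per_in_set: "b \<noteq> [] \<Longrightarrow> per b z \<in> set b"
  unfolding per_def by (rule nth_mem) (simp add: nat_less_iff)

lemma per_nth: "0 \<le> j \<Longrightarrow> j < int (length b) \<Longrightarrow> per b j = b ! nat j"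
  unfolding per_def by simp

lemma per_mod: "z mod int (length b) = z' mod int (length b) \<Longrightarrow> per b z = per b z'"
  unfolding per_def by simp

lemma per_period: "per b (z + int (length b)) = per b z"
  by (rule per_mod) simp

lemma per_surj:
  assumes "l \<in> set b"
  obtains j where "per b j = l"
proof -
  obtain i where "i < length b" "b ! i = l" using assms by (auto simp: in_set_conv_nth)
  then show ?thesis using that[of "int i"] by (simp add: per_nth)
qed

lemma per_consecutive:
  fixes b :: "'a list" and z :: int
  assumes "b \<noteq> []"
  defines "i \<equiv> nat (z mod int (length b))"
  shows "per b z = (b @ b) ! i" and "per b (z + 1) = (b @ b) ! Suc i"
    and "Suc i < length (b @ b)"
proof -
  let ?L = "int (length b)"
  have r: "0 \<le> z mod ?L" "z mod ?L < ?L" using assms by auto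
  then have i: "i < length b" by (simp add: i_def nat_less_iff)
  show "per b z = (b @ b) ! i" using i by (simp add: per_def i_def nth_append)
  show "Suc i < length (b @ b)" using i by simp
  show "per b (z + 1) = (b @ b) ! Suc i"
  proof (cases "Suc i < length b")
    case True
    then have lt: "z mod ?L + 1 < ?L" using r by (simp add: i_def nat_less_iff)
    have "(z + 1) mod ?L = (z mod ?L + 1) mod ?L" by (simp add: mod_add_left_eq)
    also have "\<dots> = z mod ?L + 1" using lt r by (simp add: mod_pos_pos_trivial)
    finally show ?thesis using True r unfolding per_def i_def
      by (simp add: nth_append Suc_nat_eq_nat_zadd1 add.commute)
  next
    case False
    then have "Suc i = length b" using i by simp
    then have "z mod ?L + 1 = ?L" using r by (simp add: i_def)
    then have "(z + 1) mod ?L = 0" by (metis mod_add_left_eq mod_self)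
    then show ?thesis using \<open>Suc i = length b\<close> by (simp add: per_def nth_append)
  qed
qed

lemma band_admissible:
  assumes b: "is_band A s t Rel b"
  shows "admissible A s t Rel (per b z) (per b (z + 1))"
proof -
  have "is_string A s t Rel (concat (replicate 2 b))" using b by (simp add: is_band_def)
  then have "is_string A s t Rel (b @ b)" by (simp add: numeral_2_eq_2)
  from string_admissible[OF this per_consecutive(3)[OF band_ne[OF b], of z]]
  show ?thesis unfolding per_consecutive(1,2)[OF band_ne[OF b], of z] .
qed

lemma band_joinable: "is_band A s t Rel b \<Longrightarrow> joinable s t (per b z) (per b (z + 1))"
  using band_admissible[of A s t Rel b z] by (simp add: admissible_def)

lemma band_vertex:
  assumes b: "is_band A s t Rel b" and x: "x \<in> walk_verts s t b"
  obtains z where "ltgt s t (per b z) = x"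
proof -
  obtain l where l: "l \<in> set b" "x = lsrc s t l \<or> x = ltgt s t l"
    using x by (auto simp: walk_verts_def)
  obtain j where j: "per b j = l" using per_surj[OF l(1)] by blast
  have "ltgt s t (per b (j - 1)) = lsrc s t (per b j)"
    using band_joinable[OF b, of "j - 1"] by (simp add: joinable_def)
  then show ?thesis using that l(2) j by metis
qed

section \<open>Periodicity and primitivity of bands\<close>

lemma period_mult:
  fixes G :: "int \<Rightarrow> 'a" and p :: int
  assumes period: "\<And>z. G (z + p) = G z"
  shows "G (z + k * p) = G z"
proof -
  have nonneg: "G (z + int n * p) = G z" for n z
  proof (induction n arbitrary: z)
    case (Suc n)
    have "G (z + int (Suc n) * p) = G ((z + int n * p) + p)" by (simp add: algebra_simps)
    also have "\<dots> = G z" using period Suc.IH by simp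
    finally show ?case .
  qed simp
  show ?thesis
  proof (cases "k \<ge> 0")
    case True
    then show ?thesis using nonneg[where n = "nat k"] by simp
  next
    case False
    have "G z = G (z + k * p + int (nat (- k)) * p)" using False by (simp add: algebra_simps)
    also have "\<dots> = G (z + k * p)" by (rule nonneg)
    finally show ?thesis by simp
  qed
qed

lemma length_concat_replicate: "length (concat (replicate m c)) = m * length c"
  by (induction m) auto

lemma concat_replicate_nth:
  "length c = n \<Longrightarrow> j < m * n \<Longrightarrow> concat (replicate m c) ! j = c ! (j mod n)"
proof (induction m arbitrary: j)
  case (Suc m)
  show ?case
  proof (cases "j < n")
    case True
    then show ?thesis using Suc.prems by (simp add: nth_append)
  next
    case False
    then have "concat (replicate (Suc m) c) ! j = concat (replicate m c) ! (j - n)"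
      using Suc.prems by (simp add: nth_append)
    also have "\<dots> = c ! ((j - n) mod n)" using Suc False by (intro Suc.IH) auto
    also have "(j - n) mod n = j mod n" using False by (simp add: mod_if)
    finally show ?thesis .
  qed
qed simp

lemma periodic_list_is_power:
  assumes b: "b \<noteq> []" and n: "0 < n" "n dvd length b" and period: "\<And>j. j < length b \<Longrightarrow> b ! j = b ! (j mod n)"
  shows "b = concat (replicate (length b div n) (take n b))"
proof (rule nth_equalityI)
  have len: "length b = length b div n * n" using n(2) by simp
  have "n \<le> length b" using n b by (simp add: dvd_imp_le)
  then have lt: "length (take n b) = n" by simp
  show "length b = length (concat (replicate (length b div n) (take n b)))"
    by (metis len length_concat_replicate lt)
  fix j assume j: "j < length b"
  have "j mod n < n" using n(1) by simp
  then show "b ! j = concat (replicate (length b div n) (take n b)) ! j"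
    using period[OF j] concat_replicate_nth[OF lt, of j] j len by simp
qed

lemma band_minimal_period:
  assumes b: "is_band A s t Rel b" and d: "0 < d" "d dvd int (length b)"
    and period: "\<And>w. per b (w + d) = per b w"
  shows "d = int (length b)"
proof (rule ccontr)
  assume ne: "d \<noteq> int (length b)"
  define n where "n = nat d"
  define m where "m = length b div n"
  define c where "c = take n b"
  have bne: "b \<noteq> []" using band_ne[OF b] .
  have dn: "d = int n" using d by (simp add: n_def)
  have ndvd: "n dvd length b" using d(2) by (simp add: dn)
  have n: "0 < n" "n < length b"
    using d ne zdvd_imp_le[OF d(2)] bne by (auto simp: n_def)
  have pn: "per b (w + int n * k) = per b w" for w k
    using period_mult[of "per b" d w k] period by (simp add: dn algebra_simps)
  have "b ! j = b ! (j mod n)" if "j < length b" for j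
  proof -
    have "b ! j = per b (int (j mod n) + int n * int (j div n))"
      using that by (simp add: per_nth flip: of_nat_mult of_nat_add)
    also have "\<dots> = per b (int (j mod n))" by (rule pn)
    also have "\<dots> = b ! (j mod n)"
      using n mod_less_divisor[OF n(1), of j] by (simp add: per_nth)
    finally show ?thesis .
  qed
  then have power: "b = concat (replicate m c)"
    unfolding m_def c_def by (rule periodic_list_is_power[OF bne n(1) ndvd])
  have m2: "m \<ge> 2"
    using n ndvd by (auto simp: m_def elim!: dvdE)
  have "is_string A s t Rel c"
    using b unfolding is_band_def c_def by (auto intro: is_string_sublist)
  moreover have "cyclic_walk s t c"
  proof -
    have cne: "c \<noteq> []" using n bne by (simp add: c_def)
    have "hd c = per b 0" using cne bne by (simp add: c_def hd_conv_nth per_nth)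
    moreover have "last c = per b (int n - 1)"
      using cne n by (simp add: c_def last_conv_nth per_nth nat_diff_distrib')
    moreover have "ltgt s t (per b (int n - 1)) = lsrc s t (per b 0)"
      using band_joinable[OF b, of "int n - 1"] pn[of 0 1] by (simp add: joinable_def)
    ultimately show ?thesis using cne by (simp add: cyclic_walk_def)
  qed
  ultimately show False using b m2 power unfolding is_band_def by blast
qed

lemma periodic_agree:
  fixes f g :: "int \<Rightarrow> 'a"
  assumes pf: "\<And>z. f (z + p) = f z" and pg: "\<And>z. g (z + q) = g z" and pq: "0 < p" "0 < q"
    and agree: "\<And>n::nat. f (int n) = g (int n)"
  shows "f z = g z"
proof -
  have "p * q \<ge> 1" using pq by (simp add: int_one_le_iff_zero_less)
  then have pos: "z + \<bar>z\<bar> * (p * q) \<ge> 0"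
    by (smt (verit) abs_ge_zero mult_le_cancel_left1)
  have "f z = f (z + (\<bar>z\<bar> * q) * p)" using period_mult[of f p, OF pf] by simp
  also have "\<dots> = g (z + (\<bar>z\<bar> * p) * q)" using agree[of "nat (z + \<bar>z\<bar> * (p * q))"] pos
    by (simp add: algebra_simps)
  also have "\<dots> = g z" using period_mult[of g q, OF pg] by simp
  finally show ?thesis .
qed

lemma forward_divergence:
  fixes f g :: "int \<Rightarrow> 'a"
  assumes pf: "\<And>z. f (z + p) = f z" and pg: "\<And>z. g (z + q) = g z" and pq: "0 < p" "0 < q"
    and at0: "f 0 = g 0" and differ: "f \<noteq> g"
  obtains z where "f z = g z" and "f (z + 1) \<noteq> g (z + 1)"
proof -
  have "\<exists>n::nat. f (int n) \<noteq> g (int n)"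
  proof (rule ccontr)
    assume "\<not> (\<exists>n::nat. f (int n) \<noteq> g (int n))"
    then have "f z = g z" for z
      using periodic_agree[where f = f and g = g and p = p and q = q, OF pf pg pq] by blast
    then show False using differ by blast
  qed
  then obtain n where n: "f (int n) \<noteq> g (int n)" and least: "\<And>k. k < n \<Longrightarrow> f (int k) = g (int k)"
    using exists_least_iff[of "\<lambda>n. f (int n) \<noteq> g (int n)"] by blast
  obtain k where "n = Suc k" using n at0 by (cases n) auto
  then show ?thesis using that[of "int k"] least[of k] n by (simp add: add.commute)
qed

lemma backward_divergence:
  fixes f g :: "int \<Rightarrow> 'a"
  assumes pf: "\<And>z. f (z + p) = f z" and pg: "\<And>z. g (z + q) = g z" and pq: "0 < p" "0 < q"
    and at0: "f 0 = g 0" and differ: "f \<noteq> g"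
  obtains z where "f z = g z" and "f (z - 1) \<noteq> g (z - 1)"
proof -
  have pf': "f (- (z + p)) = f (- z)" and pg': "g (- (z + q)) = g (- z)" for z
    using period_mult[of f p "- z" "- 1", OF pf] period_mult[of g q "- z" "- 1", OF pg] by simp_all
  have ne: "(\<lambda>z. f (- z)) \<noteq> (\<lambda>z. g (- z))"
  proof
    assume "(\<lambda>z. f (- z)) = (\<lambda>z. g (- z))"
    then have "f (- (- z)) = g (- (- z))" for z by (rule fun_cong)
    then show False using differ by auto
  qed
  have at0': "f (- 0) = g (- 0)" using at0 by simp
  obtain z where "f (- z) = g (- z)" "f (- (z + 1)) \<noteq> g (- (z + 1))"
    by (rule forward_divergence[where f = "\<lambda>z. f (- z)" and g = "\<lambda>z. g (- z)" and p = p and q = q,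
          OF pf' pg' pq at0' ne])
  then show ?thesis using that[of "- z"] by simp
qed

text \<open>Bands whose periodic readings agree after a shift are rotations of each other:
  both lengths are periods of the common reading, hence so is their gcd, which by
  primitivity equals both lengths.\<close>

lemma agreeing_bands_rotate:
  assumes b1: "is_band A s t Rel b1" and b2: "is_band A s t Rel b2"
    and agree: "\<And>z. per b1 (i1 + z) = per b2 (i2 + z)"
  shows "\<exists>k. b2 = rotate k b1"
proof -
  define L1 where "L1 = int (length b1)"
  define L2 where "L2 = int (length b2)"
  define G where "G z = per b1 (i1 + z)" for z
  have G1: "G (z + L1) = G z" for z unfolding G_def L1_def using per_period[of b1 "i1 + z"]
    by (simp add: add.assoc)
  have G2: "G (z + L2) = G z" for z unfolding G_def agree L2_def using per_period[of b2 "i2 + z"]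
    by (simp add: add.assoc)
  define d where "d = gcd L1 L2"
  obtain u v where uv: "u * L1 + v * L2 = d" using bezout_int d_def by blast
  have Gd: "G (z + d) = G z" for z
  proof -
    have "G (z + d) = G (z + u * L1 + v * L2)" using uv by (simp add: algebra_simps)
    also have "\<dots> = G (z + u * L1)" by (rule period_mult[of G L2, OF G2])
    also have "\<dots> = G z" by (rule period_mult[of G L1, OF G1])
    finally show ?thesis .
  qed
  have d0: "d > 0" using band_ne[OF b1] band_ne[OF b2] by (simp add: d_def L1_def L2_def)
  have p1: "per b1 (w + d) = per b1 w" and p2: "per b2 (w + d) = per b2 w" for w
    using Gd[of "w - i1"] Gd[of "w - i2"] by (simp_all add: G_def agree)
  have "d = L1" using band_minimal_period[OF b1 d0 _ p1] by (simp add: d_def L1_def)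
  moreover have "d = L2" using band_minimal_period[OF b2 d0 _ p2] by (simp add: d_def L2_def)
  ultimately have len: "length b2 = length b1" by (simp add: L1_def L2_def)
  define k where "k = nat ((i1 - i2) mod L1)"
  have "b2 = rotate k b1"
  proof (rule nth_equalityI)
    show "length b2 = length (rotate k b1)" using len by simp
    fix j assume "j < length b2"
    then have j: "j < length b1" using len by simp
    have "b2 ! j = per b2 (i2 + (int j - i2))" using j len by (simp add: per_nth)
    also have "\<dots> = per b1 (i1 + (int j - i2))" by (simp add: agree)
    also have "\<dots> = b1 ! nat ((i1 + (int j - i2)) mod L1)" by (simp add: per_def L1_def)
    also have "nat ((i1 + (int j - i2)) mod L1) = (k + j) mod length b1"
    proof -
      have "int ((k + j) mod length b1) = (int k + int j) mod L1" by (simp add: L1_def zmod_int)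
      also have "\<dots> = ((i1 - i2) mod L1 + int j) mod L1"
        using band_ne[OF b1] by (simp add: k_def L1_def)
      also have "\<dots> = ((i1 - i2) + int j) mod L1" by (simp add: mod_add_left_eq)
      also have "\<dots> = (i1 + (int j - i2)) mod L1" by (simp add: algebra_simps)
      finally show ?thesis by simp
    qed
    also have "b1 ! ((k + j) mod length b1) = rotate k b1 ! j" using j by (simp add: nth_rotate)
    finally show "b2 ! j = rotate k b1 ! j" .
  qed
  then show ?thesis by blast
qed

section \<open>Bands sharing a letter\<close>

lemma shared_letter_doze:
  assumes SA: "string_algebra V A s t Rel"
    and b1: "is_band A s t Rel b1" and b2: "is_band A s t Rel b2"
    and m1: "m \<in> set b1" and m2: "m \<in> set b2"
    and not_rot: "\<not> (\<exists>k. b2 = rotate k b1)"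
  shows "has_DOZE A s t Rel"
proof -
  obtain i1 where i1: "per b1 i1 = m" using per_surj[OF m1] by blast
  obtain i2 where i2: "per b2 i2 = m" using per_surj[OF m2] by blast
  define f where "f z = per b1 (i1 + z)" for z
  define g where "g z = per b2 (i2 + z)" for z
  have pf: "f (z + int (length b1)) = f z" and pg: "g (z + int (length b2)) = g z" for z
    using per_period[of b1 "i1 + z"] per_period[of b2 "i2 + z"] by (simp_all add: f_def g_def add.assoc)
  have pos: "0 < int (length b1)" "0 < int (length b2)" using band_ne[OF b1] band_ne[OF b2] by auto
  have at0: "f 0 = g 0" using i1 i2 by (simp add: f_def g_def)
  have differ: "f \<noteq> g"
  proof
    assume "f = g"
    then have "per b1 (i1 + z) = per b2 (i2 + z)" for z by (metis f_def g_def)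
    then show False using agreeing_bands_rotate[OF b1 b2] not_rot by blast
  qed
  have in_sets: "f z \<in> set b1" "g z \<in> set b2" for z
    using per_in_set band_ne[OF b1] band_ne[OF b2] by (auto simp: f_def g_def)
  have adm: "admissible A s t Rel (f z) (f (z + 1))" "admissible A s t Rel (g z) (g (z + 1))" for z
    using band_admissible[OF b1, of "i1 + z"] band_admissible[OF b2, of "i2 + z"]
    by (simp_all add: f_def g_def add.assoc)
  text \<open>Where the readings split forwards, a zero-relation links the two bands.\<close>
  obtain z where fwd_split: "f z = g z" "f (z + 1) \<noteq> g (z + 1)"
    using forward_divergence[OF pf pg pos at0 differ] by blast
  obtain \<beta> \<gamma> where dirs: "f (z + 1) = Dir \<beta> \<and> g (z + 1) = Inv \<gamma> \<or> f (z + 1) = Inv \<gamma> \<and> g (z + 1) = Dir \<beta>"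
    and zero: "joinable s t (Dir \<gamma>) (Dir \<beta>)" "zero_pair Rel (Dir \<gamma>) (Dir \<beta>)"
    using admissible_branching[OF SA adm(1)[of z]] adm(2)[of z] fwd_split by metis
  text \<open>Where they split backwards, each band can be continued into the inverse of the other.\<close>
  obtain y where back_split: "f y = g y" "f (y - 1) \<noteq> g (y - 1)"
    using backward_divergence[OF pf pg pos at0 differ] by blast
  have "ltgt s t (f (y - 1)) = ltgt s t (g (y - 1))"
    using adm(1)[of "y - 1"] adm(2)[of "y - 1"] back_split(1) by (simp add: admissible_def joinable_def)
  then have crossing: "joinable s t (f (y - 1)) (linv (g (y - 1)))"
    "joinable s t (g (y - 1)) (linv (f (y - 1)))"
    using back_split(2) by (auto simp: joinable_def)
  from dirs show ?thesis
  proof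
    assume "f (z + 1) = Dir \<beta> \<and> g (z + 1) = Inv \<gamma>"
    then have "Dir \<beta> \<in> set b1" "Dir \<gamma> \<in> set (winv b2)"
      using in_sets[of "z + 1"] by (auto intro: image_eqI[of _ _ "Inv \<gamma>"])
    moreover have "linv (g (y - 1)) \<in> set (winv b2)" using in_sets(2) by simp
    ultimately show ?thesis
      using doze_from_two_bands[OF b1 is_band_winv[OF b2] _ in_sets(1)] zero crossing(1) by blast
  next
    assume "f (z + 1) = Inv \<gamma> \<and> g (z + 1) = Dir \<beta>"
    then have "Dir \<beta> \<in> set b2" "Dir \<gamma> \<in> set (winv b1)"
      using in_sets[of "z + 1"] by (auto intro: image_eqI[of _ _ "Inv \<gamma>"])
    moreover have "linv (f (y - 1)) \<in> set (winv b1)" using in_sets(1) by simp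
    ultimately show ?thesis
      using doze_from_two_bands[OF b2 is_band_winv[OF b1] _ in_sets(2)] zero crossing(2) by blast
  qed
qed

lemma winv_rotate: "\<exists>n. winv (rotate k w) = rotate n (winv w)"
proof -
  have "rev (rotate k xs) = rotate (length xs - k mod length xs) (rev xs)" for xs
  proof (cases "xs = [] \<or> k mod length xs = 0")
    case True
    then show ?thesis by (auto simp: rotate_rev)
  next
    case False
    then have "(length xs - k mod length xs) mod length xs = length xs - k mod length xs" by simp
    then show ?thesis using False by (simp add: rotate_rev rotate_conv_mod[of k xs])
  qed
  then show ?thesis unfolding winv_def rotate_map[symmetric] by blast
qed

lemma shared_arrow_doze:
  assumes SA: "string_algebra V A s t Rel"
    and b1: "is_band A s t Rel b1" and b2: "is_band A s t Rel b2"
    and ne: "\<not> band_equiv b1 b2"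
    and l1: "l1 \<in> set b1" and l2: "l2 \<in> set b2" and same: "arr l1 = arr l2"
  shows "has_DOZE A s t Rel"
proof -
  have "l1 = l2 \<or> l1 = linv l2" using same by (cases l1; cases l2) auto
  then show ?thesis
  proof
    assume "l1 = l2"
    moreover have "\<not> (\<exists>k. b2 = rotate k b1)" using ne by (auto simp: band_equiv_def)
    ultimately show ?thesis using shared_letter_doze[OF SA b1 b2 l1] l2 by blast
  next
    assume "l1 = linv l2"
    then have "l1 \<in> set (winv b2)" using l2 by simp
    moreover have "\<not> (\<exists>k. winv b2 = rotate k b1)"
    proof
      assume "\<exists>k. winv b2 = rotate k b1"
      then obtain k where "b2 = winv (rotate k b1)" by (metis winv_winv)
      then obtain n where "b2 = rotate n (winv b1)" using winv_rotate by metis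
      then show False using ne by (auto simp: band_equiv_def)
    qed
    ultimately show ?thesis using shared_letter_doze[OF SA b1 is_band_winv[OF b2] l1] by blast
  qed
qed

section \<open>Bands sharing a vertex\<close>

text \<open>Step (3) of the plan: at a vertex x common to two bands without common arrows,
  the letter e of the first band arriving at x has three different joinable
  successors (its successor f in the first band, and the two letters of the second
  band at x); one of the latter two reads a zero-relation after e.\<close>

lemma shared_vertex_doze:
  assumes SA: "string_algebra V A s t Rel"
    and b1: "is_band A s t Rel b1" and b2: "is_band A s t Rel b2"
    and disjoint: "\<And>l1 l2. l1 \<in> set b1 \<Longrightarrow> l2 \<in> set b2 \<Longrightarrow> arr l1 \<noteq> arr l2"
    and x1: "x \<in> walk_verts s t b1" and x2: "x \<in> walk_verts s t b2"
  shows "has_DOZE A s t Rel"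
proof -
  obtain z1 where z1: "ltgt s t (per b1 z1) = x" using band_vertex[OF b1 x1] by blast
  obtain z2 where z2: "ltgt s t (per b2 z2) = x" using band_vertex[OF b2 x2] by blast
  define e where "e = per b1 z1"
  define f where "f = per b1 (z1 + 1)"
  define g where "g = per b2 z2"
  define h where "h = per b2 (z2 + 1)"
  have sets: "e \<in> set b1" "f \<in> set b1" "g \<in> set b2" "h \<in> set b2"
    using per_in_set band_ne[OF b1] band_ne[OF b2] by (auto simp: e_def f_def g_def h_def)
  have ef: "admissible A s t Rel e f" using band_admissible[OF b1] by (simp add: e_def f_def)
  have gh: "admissible A s t Rel g h" using band_admissible[OF b2] by (simp add: g_def h_def)
  have at_x: "ltgt s t e = x" "lsrc s t f = x" "ltgt s t g = x" "lsrc s t h = x"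
    using ef gh z1 z2 by (auto simp: e_def g_def admissible_def joinable_def)
  have distinct: "f \<noteq> h" "f \<noteq> linv g" "h \<noteq> linv g" "e \<noteq> linv h" "e \<noteq> g"
    using disjoint[OF sets(2) sets(4)] disjoint[OF sets(2) sets(3)] disjoint[OF sets(1) sets(4)]
      disjoint[OF sets(1) sets(3)] gh by (auto simp: admissible_def joinable_def)
  have "joinable s t e h" "joinable s t e (linv g)"
    using at_x distinct by (auto simp: joinable_def)
  moreover have "arr h \<in> A" "arr (linv g) \<in> A" using gh by (simp_all add: admissible_def)
  ultimately have "zero_pair Rel e h \<or> zero_pair Rel e (linv g)"
    using three_successors_zero[OF SA ef] distinct(1-3) by blast
  then show ?thesis
  proof
    assume "zero_pair Rel e h"
    moreover have "joinable s t g f" using at_x distinct by (auto simp: joinable_def)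
    ultimately show ?thesis
      using doze_from_two_bands[OF b2 b1 sets(4,3,1,2)] \<open>joinable s t e h\<close> by blast
  next
    assume "zero_pair Rel e (linv g)"
    moreover have "joinable s t (linv h) f" using at_x distinct by (auto simp: joinable_def)
    moreover have "linv g \<in> set (winv b2)" "linv h \<in> set (winv b2)" using sets by simp_all
    ultimately show ?thesis
      using doze_from_two_bands[OF is_band_winv[OF b2] b1 _ _ sets(1,2)]
        \<open>joinable s t e (linv g)\<close> by blast
  qed
qed

theorem lemma2p1:
  fixes V :: "'v set" and A :: "'e set" and s t :: "'e \<Rightarrow> 'v" and Rel :: "'e list set"
    and b1 b2 :: "'e letter list"
  assumes "string_algebra V A s t Rel"
    and "\<not> has_DOZE A s t Rel"
    and "is_band A s t Rel b1" and "is_band A s t Rel b2"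
    and "\<not> band_equiv b1 b2"
  shows "card (walk_verts s t b1 \<inter> walk_verts s t b2) \<le> 1"
proof -
  have no_common_arrow: "arr l1 \<noteq> arr l2" if "l1 \<in> set b1" "l2 \<in> set b2" for l1 l2
    using shared_arrow_doze[OF assms(1,3,4,5) that] assms(2) by blast
  have "walk_verts s t b1 \<inter> walk_verts s t b2 = {}"
    using shared_vertex_doze[OF assms(1,3,4) no_common_arrow] assms(2) by blast
  then show ?thesis by simp
qed

end
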